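(* Let $q$ be a prime power, $n\ge1$, $P=\sum_{s=0}^m a_s\theta^s\in\mathbb F_q[\theta]$ nonzero, where $m\ge\deg P$ is an integer with $(q-1)\mid(m+n)$, and put $\iota(P)=\sum_{i=0}^m a_{m-i}\theta^i$ and $k=\frac{m+n}{q-1}-1$, assumed $\ge1$. For a polynomial $R=\sum_s b_s\theta^s$ let $\mathfrak M(R,T,n,k)\in M_{k\times k}(\mathbb F_q[T])$ have entries $\mathfrak M(R,T,n,k)_{i,j}=\sum_{l=0}^nT^{n-l}(-1)^l\binom nl b_{iq-j-l}$ ($1\le i,j\le k$, $b_s=0$ for $s<0$ or $s>m$). Let $W_3=\sum_{i=1}^k\varepsilon_{i,k+1-i}$ be the $k\times k$ matrix with ones on the antidiagonal and zeros elsewhere. Then $$W_3\,\mathfrak M(P,T,n,k)\,W_3^{-1}=(-T)^n\,\mathfrak M(\iota(P),T^{-1},n,k).$$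
   Context: $\varepsilon_{ij}$ denotes the elementary matrix with $1$ in position $(i,j)$ and $0$ elsewhere. $\mathfrak M(\iota(P),T^{-1},n,k)$ means $\mathfrak M(\iota(P),T,n,k)$ with $T$ replaced by $T^{-1}$. Binomial coefficients are read in $\mathbb F_q$. *)

theory Defs
  imports "HOL-Computational_Algebra.Polynomial" "HOL-Computational_Algebra.Fraction_Field" "HOL-Computational_Algebra.Polynomial_Factorial"
    "Jordan_Normal_Form.Gauss_Jordan_Elimination"
begin

definition bcoef :: "nat \<Rightarrow> 'a::zero poly \<Rightarrow> int \<Rightarrow> 'a" where
  "bcoef m R s = (if s < 0 \<or> s > int m then 0 else coeff R (nat s))"

definition iota :: "nat \<Rightarrow> 'a::comm_ring_1 poly \<Rightarrow> 'a poly" where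
  "iota m P = (\<Sum>i\<le>m. monom (coeff P (m - i)) i)"

definition Tvar :: "'a::field poly fract" where
  "Tvar = to_fract [:0, 1:]"

text \<open>The k x k matrix frak M(R, t, n, k) with 1-based indices i,j shifted to 0-based;
  q = card (UNIV :: 'a set). Entries live in F_q(T) so that t may be T or T^{-1}.\<close>
definition frakM :: "nat \<Rightarrow> 'a::{field,finite} poly \<Rightarrow> 'a poly fract \<Rightarrow> nat \<Rightarrow> nat \<Rightarrow> 'a poly fract mat" where
  "frakM m R t n k = mat k k (\<lambda>(i, j).
     \<Sum>l\<le>n. t ^ (n - l) * (-1) ^ l * to_fract [: of_nat (n choose l) :]
        * to_fract [: bcoef m R (int ((i + 1) * card (UNIV :: 'a set)) - int (j + 1) - int l) :])"

definition W3 :: "nat \<Rightarrow> 'a::field poly fract mat" where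
  "W3 k = mat k k (\<lambda>(i, j). if i + j = k - 1 then 1 else 0)"

end

theory Submission
  imports Defs
begin

text \<open>Conjugating by the antidiagonal involution W3 reverses both indices,
  (i, j) \<mapsto> (k+1-i, k+1-j). Under the identity (k+1)(q-1) = m+n the reversed index
  (k+1-i)q - (k+1-j) - l of the coefficient of P equals m - (iq - j - (n-l)),
  i.e. the index of the corresponding coefficient of \<iota>(P) after l \<mapsto> n-l.
  The substitution l \<mapsto> n-l leaves the binomial coefficient unchanged and turns
  T^{n-l} (-1)^l into (-T)^n T^{-l} (-1)^{n-l}.\<close>

lemma W3_carrier_mat: "W3 k \<in> carrier_mat k k"
  by (simp add: W3_def)

lemma dim_W3 [simp]: "dim_row (W3 k) = k" "dim_col (W3 k) = k"
  by (simp_all add: W3_def)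

lemma W3_mult_index:
  assumes A: "A \<in> carrier_mat k n" and i: "i < k" and j: "j < n"
  shows "(W3 k * A) $$ (i, j) = A $$ (k - 1 - i, j)"
proof -
  have "(W3 k * A) $$ (i, j) = (\<Sum>l<k. (if i + l = k - 1 then 1 else 0) * A $$ (l, j))"
    using A i j by (simp add: W3_def scalar_prod_def atLeast0LessThan)
  also have "\<dots> = (\<Sum>l\<in>{k - 1 - i}. A $$ (l, j))"
    using i by (intro sum.mono_neutral_cong_right) auto
  finally show ?thesis by simp
qed

lemma mult_W3_index:
  assumes A: "A \<in> carrier_mat n k" and i: "i < n" and j: "j < k"
  shows "(A * W3 k) $$ (i, j) = A $$ (i, k - 1 - j)"
proof -
  have "(A * W3 k) $$ (i, j) = (\<Sum>l<k. A $$ (i, l) * (if l + j = k - 1 then 1 else 0))"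
    using A i j by (simp add: W3_def scalar_prod_def atLeast0LessThan)
  also have "\<dots> = (\<Sum>l\<in>{k - 1 - j}. A $$ (i, l))"
    using j by (intro sum.mono_neutral_cong_right) auto
  finally show ?thesis by simp
qed

lemma W3_conjugate_index:
  assumes A: "A \<in> carrier_mat k k" and i: "i < k" and j: "j < k"
  shows "(W3 k * A * W3 k) $$ (i, j) = A $$ (k - 1 - i, k - 1 - j)"
proof -
  have "W3 k * A \<in> carrier_mat k k"
    using A W3_carrier_mat by (metis mult_carrier_mat)
  then have "(W3 k * A * W3 k) $$ (i, j) = (W3 k * A) $$ (i, k - 1 - j)"
    using i j by (rule mult_W3_index)
  also have "\<dots> = A $$ (k - 1 - i, k - 1 - j)"
    using A i j by (intro W3_mult_index) auto
  finally show ?thesis .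
qed

lemma W3_involution: "W3 k * W3 k = (1\<^sub>m k :: 'a::field poly fract mat)"
proof (rule eq_matI)
  fix i j
  assume "i < dim_row (1\<^sub>m k :: 'a poly fract mat)" "j < dim_col (1\<^sub>m k :: 'a poly fract mat)"
  then show "(W3 k * W3 k) $$ (i, j) = (1\<^sub>m k :: 'a poly fract mat) $$ (i, j)"
    by (subst W3_mult_index[OF W3_carrier_mat]) (auto simp: W3_def)
qed (auto simp: W3_def)

lemma mat_inverse_W3: "mat_inverse (W3 k :: 'a::field poly fract mat) = Some (W3 k)"
proof (cases "mat_inverse (W3 k :: 'a poly fract mat)")
  case None
  from mat_inverse(1)[OF W3_carrier_mat None, of undefined] show ?thesis
    using W3_involution[where 'a='a] W3_carrier_mat[of k]
    by (auto simp: Units_def ring_mat_def)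
next
  case (Some B)
  from mat_inverse(2)[OF W3_carrier_mat Some]
  have B: "W3 k * B = 1\<^sub>m k" "B \<in> carrier_mat k k" by auto
  have "B = (W3 k * W3 k) * B" using B by (simp add: W3_involution)
  also have "\<dots> = W3 k * (W3 k * B)" using B W3_carrier_mat by (metis assoc_mult_mat)
  also have "\<dots> = W3 k" using B W3_carrier_mat right_mult_one_mat by metis
  finally show ?thesis using Some by simp
qed

lemma coeff_iota: "coeff (iota m P) s = (if s \<le> m then coeff P (m - s) else 0)"
  by (simp add: iota_def coeff_sum coeff_monom)

lemma bcoef_iota: "bcoef m (iota m P) s = bcoef m P (int m - s)"
  by (auto simp: bcoef_def coeff_iota nat_diff_distrib)

lemma Tvar_nonzero: "(Tvar :: 'a::field poly fract) \<noteq> 0"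
  by (simp add: Tvar_def)

lemma two_le_card_field: "2 \<le> card (UNIV :: 'a::{field,finite} set)"
proof -
  have "card {0::'a, 1} \<le> card (UNIV :: 'a set)"
    by (intro card_mono) auto
  then show ?thesis by simp
qed

lemma quotient_by_card_minus_one:
  assumes "(card (UNIV :: 'a::{field,finite} set) - 1) dvd N"
    and "k = N div (card (UNIV :: 'a set) - 1) - 1" and "1 \<le> k"
  shows "int (k + 1) * (int (card (UNIV :: 'a set)) - 1) = int N"
proof -
  have "(k + 1) * (card (UNIV :: 'a set) - 1) = N"
    using assms by simp
  with two_le_card_field[where 'a='a] show ?thesis
    by (metis of_nat_1 of_nat_diff of_nat_mult one_le_numeral order_trans)
qed

lemma frakM_carrier_mat: "frakM m R t n k \<in> carrier_mat k k"
  by (simp add: frakM_def)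

lemma dim_frakM [simp]:
  "dim_row (frakM m R t n k) = k" "dim_col (frakM m R t n k) = k"
  by (simp_all add: frakM_def)

lemma frakM_index:
  fixes R :: "'a::{field,finite} poly"
  assumes "i < k" "j < k"
  shows "frakM m R t n k $$ (i, j) =
    (\<Sum>l\<le>n. t ^ (n - l) * (-1) ^ l * to_fract [: of_nat (n choose l) :]
       * to_fract [: bcoef m R (int ((i + 1) * card (UNIV :: 'a set)) - int (j + 1) - int l) :])"
  using assms by (simp add: frakM_def)

lemma neg_power_inverse_power:
  fixes t :: "'a::field"
  assumes "t \<noteq> 0" "l \<le> n"
  shows "(- t) ^ n * inverse t ^ l * (-1) ^ (n - l) = t ^ (n - l) * (-1) ^ l"
proof -
  have n: "n = (n - l) + l" using assms(2) by simp
  have "(- t) ^ n * (-1) ^ (n - l) = (t ^ (n - l) * t ^ l) * (((-1) ^ (n - l) * (-1) ^ (n - l)) * (-1) ^ l)"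
    by (subst n, subst power_minus, subst (1 2) power_add) (simp add: mult_ac)
  also have "(-1::'a) ^ (n - l) * (-1) ^ (n - l) = 1"
    by (simp flip: power_add mult_2 power_mult)
  finally show ?thesis
    using assms(1) by (simp add: power_inverse mult_ac)
qed

lemma sum_reflect_binomial_inverse:
  fixes t :: "'a::field"
  assumes "t \<noteq> 0" and c: "\<And>l. l \<le> n \<Longrightarrow> c (n - l) = c l"
  shows "(- t) ^ n * (\<Sum>l\<le>n. inverse t ^ (n - l) * (-1) ^ l * c l * g l)
       = (\<Sum>l\<le>n. t ^ (n - l) * (-1) ^ l * c l * g (n - l))"
proof -
  have "(\<Sum>l\<le>n. inverse t ^ (n - l) * (-1) ^ l * c l * g l)
      = (\<Sum>l\<le>n. inverse t ^ l * (-1) ^ (n - l) * c (n - l) * g (n - l))"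
    by (rule sum.reindex_bij_witness[of _ "\<lambda>l. n - l" "\<lambda>l. n - l"]) auto
  also have "\<dots> = (\<Sum>l\<le>n. inverse t ^ l * (-1) ^ (n - l) * c l * g (n - l))"
    using c by (intro sum.cong) auto
  finally have "(- t) ^ n * (\<Sum>l\<le>n. inverse t ^ (n - l) * (-1) ^ l * c l * g l)
      = (\<Sum>l\<le>n. ((- t) ^ n * inverse t ^ l * (-1) ^ (n - l)) * c l * g (n - l))"
    by (simp add: sum_distrib_left mult_ac)
  also have "\<dots> = (\<Sum>l\<le>n. t ^ (n - l) * (-1) ^ l * c l * g (n - l))"
    using neg_power_inverse_power[OF assms(1)] by (intro sum.cong) auto
  finally show ?thesis .
qed

lemma frakM_index_reversed:
  fixes R :: "'a::{field,finite} poly"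
  assumes kq: "int (k + 1) * (int (card (UNIV :: 'a set)) - 1) = int (m + n)"
    and ij: "i < k" "j < k"
  shows "frakM m R t n k $$ (k - 1 - i, k - 1 - j) =
    (\<Sum>l\<le>n. t ^ (n - l) * (-1) ^ l * to_fract [: of_nat (n choose l) :]
       * to_fract [: bcoef m R (int m - (int ((i + 1) * card (UNIV :: 'a set)) - int (j + 1) - int (n - l))) :])"
proof -
  have index: "int ((k - 1 - i + 1) * card (UNIV :: 'a set)) - int (k - 1 - j + 1) - int l
      = int m - (int ((i + 1) * card (UNIV :: 'a set)) - int (j + 1) - int (n - l))" if "l \<le> n" for l
  proof -
    have "k - 1 - i + 1 = k - i" "k - 1 - j + 1 = k - j"
      using ij by auto
    with ij that kq show ?thesis
      by (simp add: of_nat_diff algebra_simps)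
  qed
  have "k - 1 - i < k" "k - 1 - j < k"
    using ij by auto
  then show ?thesis
    unfolding frakM_index[OF \<open>k - 1 - i < k\<close> \<open>k - 1 - j < k\<close>]
    by (intro sum.cong refl, subst index) auto
qed

lemma smult_frakM_iota_index:
  fixes R :: "'a::{field,finite} poly"
  assumes "t \<noteq> 0" "i < k" "j < k"
  shows "((- t) ^ n \<cdot>\<^sub>m frakM m (iota m R) (inverse t) n k) $$ (i, j) =
    (\<Sum>l\<le>n. t ^ (n - l) * (-1) ^ l * to_fract [: of_nat (n choose l) :]
       * to_fract [: bcoef m R (int m - (int ((i + 1) * card (UNIV :: 'a set)) - int (j + 1) - int (n - l))) :])"
  using assms
  by (simp add: frakM_index bcoef_iota sum_reflect_binomial_inverse flip: binomial_symmetric)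

theorem proposition5p3:
  fixes P :: "'a::{field,finite} poly" and m n k :: nat
  assumes "n \<ge> 1"
    and "P \<noteq> 0"
    and "degree P \<le> m"
    and "(card (UNIV :: 'a set) - 1) dvd (m + n)"
    and "k = (m + n) div (card (UNIV :: 'a set) - 1) - 1"
    and "k \<ge> 1"
  shows "W3 k * frakM m P Tvar n k * the (mat_inverse (W3 k))
         = ((- Tvar) ^ n) \<cdot>\<^sub>m frakM m (iota m P) (inverse Tvar) n k"
proof (rule eq_matI)
  have kq: "int (k + 1) * (int (card (UNIV :: 'a set)) - 1) = int (m + n)"
    using assms(4-6) by (rule quotient_by_card_minus_one)
  fix i j
  assume "i < dim_row ((- Tvar) ^ n \<cdot>\<^sub>m frakM m (iota m P) (inverse Tvar) n k)"
    and "j < dim_col ((- Tvar) ^ n \<cdot>\<^sub>m frakM m (iota m P) (inverse Tvar) n k)"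
  then have ij: "i < k" "j < k" by simp_all
  have "(W3 k * frakM m P Tvar n k * the (mat_inverse (W3 k))) $$ (i, j)
      = frakM m P Tvar n k $$ (k - 1 - i, k - 1 - j)"
    using W3_conjugate_index[OF frakM_carrier_mat ij] by (simp add: mat_inverse_W3)
  also have "\<dots> = ((- Tvar) ^ n \<cdot>\<^sub>m frakM m (iota m P) (inverse Tvar) n k) $$ (i, j)"
    unfolding frakM_index_reversed[OF kq ij] smult_frakM_iota_index[OF Tvar_nonzero ij] ..
  finally show "(W3 k * frakM m P Tvar n k * the (mat_inverse (W3 k))) $$ (i, j)
      = ((- Tvar) ^ n \<cdot>\<^sub>m frakM m (iota m P) (inverse Tvar) n k) $$ (i, j)" .
qed (simp_all add: mat_inverse_W3)

end
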